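(* Fix a constant $c>0$ and an interval $I\subset\mathbb{R}$ of finite Lebesgue measure, and write $B^h_k:=B^h_k(\chi_I)$. Let $n\geq 3$ and define $C_1(n):=[B^0_n,B^n_0]$ and, for $k\geq 2$, $C_k(n):=[B^0_n,C_{k-1}(n)]$. Then \[ C_3(n)=\beta(n)\,B^0_{2n}+N(n), \] where \[ \beta(n):=\sum_{L_1=1}^{n-1}\sum_{L_2=1}^{n-L_1} b_{L_1}(n,n)\,b_{L_2}(n,n-L_1)\,b_{n-(L_1+L_2)}\big(n,n-(L_1+L_2)\big)\in\mathbb{R}\setminus\{0\}, \] \[ N(n):=\sum_{L_1=1}^{n-1}\sum_{L_2=1}^{n-L_1}\sum_{L_3=1}^{n-(L_1+L_2)} b_{L_1}(n,n)\,b_{L_2}(n,n-L_1)\,b_{L_3}\big(n,n-(L_1+L_2)\big)\,B^{\,n-(L_1+L_2+L_3)}_{\,3n-(L_1+L_2+L_3)}, \] the triple sum running only over those $(L_1,L_2,L_3)$ with $L_1+L_2+L_3\neq n$. Consequently \[ N(n)^*=\sum_{L_1,L_2,L_3}(\text{same coefficients})\,B_{\,n-(L_1+L_2+L_3)}^{\,3n-(L_1+L_2+L_3)}. \]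
   Context: The RPQWN (renormalized powers of quantum white noise) algebra is the $*$-Lie algebra generated by symbols $B^h_k(f)$, $h,k\in\{0,1,2,\dots\}$, $f$ a test function, with involution $(B^h_k(f))^*=B^k_h(\bar f)$, linear in $f$, and commutation relations \[ [B^N_K(\bar g),B^n_k(f)]=\sum_{L=1}^{K\wedge n} b_L(K,n)\,B^{N+n-L}_{K+k-L}(\bar g f)-\sum_{L=1}^{k\wedge N} b_L(k,N)\,B^{N+n-L}_{K+k-L}(\bar g f), \] where $b_x(y,z):=\epsilon_{y,0}\,\epsilon_{z,0}\binom{y}{x}z^{(x)}c^{x-1}$, $\epsilon_{n,k}:=1-\delta_{n,k}$ ($\delta$ the Kronecker delta), $z^{(x)}:=z(z-1)\cdots(z-x+1)$ with $z^{(0)}=1$, and an empty sum is $0$. These relations arise from the white noise relations $[b_t,b_s^\dagger]=\delta(t-s)$ with the renormalization $\delta^l(t)=c^{l-1}\delta(t)$ for $l\ge2$. $\chi_I$ denotes the indicator of $I$, so $\chi_I^2=\chi_I$. *)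

theory Defs
  imports "HOL-Analysis.Analysis"
begin

definition eps :: "nat \<Rightarrow> nat \<Rightarrow> real" where
  "eps n k = (if n = k then 0 else 1)"

definition falling :: "nat \<Rightarrow> nat \<Rightarrow> real" where
  "falling z x = (\<Prod>i<x. real z - real i)"

definition bcoef :: "real \<Rightarrow> nat \<Rightarrow> nat \<Rightarrow> nat \<Rightarrow> real" where
  "bcoef c x y z = eps y 0 * eps z 0 * real (y choose x) * falling z x * c powi (int x - 1)"

definition star_lie_algebra ::
  "(complex \<Rightarrow> 'a::ab_group_add \<Rightarrow> 'a) \<Rightarrow> ('a \<Rightarrow> 'a \<Rightarrow> 'a) \<Rightarrow> ('a \<Rightarrow> 'a) \<Rightarrow> bool" where
  "star_lie_algebra sc br st \<longleftrightarrow> vector_space sc \<and>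
     (\<forall>a x y z. br (sc a x + y) z = sc a (br x z) + br y z) \<and>
     (\<forall>a x y z. br z (sc a x + y) = sc a (br z x) + br z y) \<and>
     (\<forall>x y. br x y = - br y x) \<and>
     (\<forall>x y z. br x (br y z) + br y (br z x) + br z (br x y) = 0) \<and>
     (\<forall>x. st (st x) = x) \<and>
     (\<forall>a x y. st (sc a x + y) = sc (cnj a) (st x) + st y) \<and>
     (\<forall>x y. st (br x y) = br (st y) (st x))"

definition rpqwn ::
  "real \<Rightarrow> (real \<Rightarrow> complex) set \<Rightarrow> (complex \<Rightarrow> 'a::ab_group_add \<Rightarrow> 'a) \<Rightarrow> ('a \<Rightarrow> 'a \<Rightarrow> 'a) \<Rightarrow> ('a \<Rightarrow> 'a)
    \<Rightarrow> (nat \<Rightarrow> nat \<Rightarrow> (real \<Rightarrow> complex) \<Rightarrow> 'a) \<Rightarrow> bool" where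
  "rpqwn c T sc br st B \<longleftrightarrow>
     star_lie_algebra sc br st \<and>
     (\<forall>f\<in>T. \<forall>g\<in>T. \<forall>a. (\<lambda>t. a * f t + g t) \<in> T) \<and>
     (\<forall>f\<in>T. \<forall>g\<in>T. (\<lambda>t. f t * g t) \<in> T) \<and>
     (\<forall>f\<in>T. (\<lambda>t. cnj (f t)) \<in> T) \<and>
     (\<forall>h k a. \<forall>f\<in>T. \<forall>g\<in>T. B h k (\<lambda>t. a * f t + g t) = sc a (B h k f) + B h k g) \<and>
     (\<forall>h k. \<forall>f\<in>T. st (B h k f) = B k h (\<lambda>t. cnj (f t))) \<and>
     (\<forall>N K n k. \<forall>f\<in>T. \<forall>g\<in>T.
        br (B N K (\<lambda>t. cnj (g t))) (B n k f) =
          (\<Sum>L\<in>{1..min K n}. sc (complex_of_real (bcoef c L K n)) (B (N + n - L) (K + k - L) (\<lambda>t. cnj (g t) * f t)))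
        - (\<Sum>L\<in>{1..min k N}. sc (complex_of_real (bcoef c L k N)) (B (N + n - L) (K + k - L) (\<lambda>t. cnj (g t) * f t))))"

end

theory Submission
  imports Defs
begin

text \<open>
  Bracketing B^h_k with the pure annihilator B^0_n (h \<le> n) lowers h by some L \<in> {1..h}, with
  coefficient b_L(n,h), and raises k by n - L; the second sum of the commutation relation is empty.
  Starting from B^n_0, three brackets give a triple sum over L1 + L2 + L3 \<le> n, whose terms with
  L1 + L2 + L3 = n are all multiples of B^0_2n and collect into \<beta>(n). For c > 0 every b_L is
  nonnegative, and the summand L1 = L2 = 1 is positive once n \<ge> 3, so \<beta>(n) > 0.
\<close>

lemma falling_pos: "x \<le> z \<Longrightarrow> falling z x > 0"
  unfolding falling_def by (rule prod_pos) auto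

lemma falling_nonneg: "falling z x \<ge> 0"
proof (cases "x \<le> z")
  case True
  then show ?thesis using falling_pos[of x z] by simp
next
  case False
  then have "(\<Prod>i<x. real z - real i) = 0"
    by (intro prod_zero) (auto intro!: bexI[of _ z])
  then show ?thesis unfolding falling_def by linarith
qed

lemma bcoef_nonneg: "c > 0 \<Longrightarrow> bcoef c x y z \<ge> 0"
  unfolding bcoef_def eps_def using falling_nonneg[of z x]
  by (intro mult_nonneg_nonneg) auto

lemma bcoef_pos:
  "c > 0 \<Longrightarrow> y \<noteq> 0 \<Longrightarrow> z \<noteq> 0 \<Longrightarrow> x \<le> y \<Longrightarrow> x \<le> z \<Longrightarrow> bcoef c x y z > 0"
  unfolding bcoef_def eps_def using falling_pos[of x z]
  by (intro mult_pos_pos) auto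

lemma bcoef_right_0 [simp]: "bcoef c x y 0 = 0"
  unfolding bcoef_def eps_def by simp

definition triple_bcoef :: "real \<Rightarrow> nat \<Rightarrow> nat \<Rightarrow> nat \<Rightarrow> nat \<Rightarrow> real" where
  "triple_bcoef c n L1 L2 L3 = bcoef c L1 n n * bcoef c L2 n (n - L1) * bcoef c L3 n (n - (L1 + L2))"

lemma triple_bcoef_nonneg: "c > 0 \<Longrightarrow> triple_bcoef c n L1 L2 L3 \<ge> 0"
  unfolding triple_bcoef_def by (intro mult_nonneg_nonneg bcoef_nonneg)

lemma triple_bcoef_eq_0: "n \<le> L1 + L2 \<Longrightarrow> triple_bcoef c n L1 L2 L3 = 0"
  unfolding triple_bcoef_def by simp

lemma sum_triple_bcoef_pos:
  assumes "c > 0" and "n \<ge> 3"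
  shows "(\<Sum>L1\<in>{1..n-1}. \<Sum>L2\<in>{1..n-L1}. triple_bcoef c n L1 L2 (n - (L1 + L2))) > 0"
proof (rule sum_pos2)
  show "0 < (\<Sum>L2\<in>{1..n-1}. triple_bcoef c n 1 L2 (n - (1 + L2)))"
  proof (rule sum_pos2)
    show "0 < triple_bcoef c n 1 1 (n - (1 + 1))"
      unfolding triple_bcoef_def using assms by (intro mult_pos_pos bcoef_pos) auto
  qed (use assms triple_bcoef_nonneg in auto)
qed (use assms triple_bcoef_nonneg in \<open>auto intro: sum_nonneg\<close>)

locale star_lie =
  fixes sc :: "complex \<Rightarrow> 'a::ab_group_add \<Rightarrow> 'a" and br :: "'a \<Rightarrow> 'a \<Rightarrow> 'a" and st :: "'a \<Rightarrow> 'a"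
  assumes star_lie_algebra: "star_lie_algebra sc br st"
begin

sublocale vector_space sc
  using star_lie_algebra unfolding star_lie_algebra_def by blast

lemma bracket_right_linear: "br z (sc a x + y) = sc a (br z x) + br z y"
  using star_lie_algebra unfolding star_lie_algebra_def by blast

lemma star_antilinear: "st (sc a x + y) = sc (cnj a) (st x) + st y"
  using star_lie_algebra unfolding star_lie_algebra_def by blast

lemma additive_bracket_right: "Modules.additive (br z)"
  by standard (use bracket_right_linear[of z 1] in simp)

lemma additive_star: "Modules.additive st"
  by standard (use star_antilinear[of 1] in simp)

lemmas bracket_right_sum = Modules.additive.sum[OF additive_bracket_right]
lemmas star_sum = Modules.additive.sum[OF additive_star]

lemma bracket_right_scale: "br z (sc a x) = sc a (br z x)"
  using bracket_right_linear[of z a x 0] Modules.additive.zero[OF additive_bracket_right] by simp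

lemma star_scale_real: "st (sc (complex_of_real a) x) = sc (complex_of_real a) (st x)"
  using star_antilinear[of "complex_of_real a" x 0] Modules.additive.zero[OF additive_star] by simp

end

locale rpqwn_indicator =
  fixes c :: real and T :: "(real \<Rightarrow> complex) set"
    and sc :: "complex \<Rightarrow> 'a::ab_group_add \<Rightarrow> 'a" and br :: "'a \<Rightarrow> 'a \<Rightarrow> 'a" and st :: "'a \<Rightarrow> 'a"
    and B :: "nat \<Rightarrow> nat \<Rightarrow> (real \<Rightarrow> complex) \<Rightarrow> 'a" and \<phi> :: "real \<Rightarrow> complex"
  assumes rpqwn: "rpqwn c T sc br st B"
    and indicator_in_T: "\<phi> \<in> T"
    and indicator_01: "\<And>t. \<phi> t = 0 \<or> \<phi> t = 1"
begin

sublocale star_lie sc br st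
  using rpqwn unfolding rpqwn_def by unfold_locales blast

lemma cnj_indicator: "(\<lambda>t. cnj (\<phi> t)) = \<phi>"
proof
  show "cnj (\<phi> t) = \<phi> t" for t
    using indicator_01[of t] by auto
qed

lemma cnj_indicator_mult: "(\<lambda>t. cnj (\<phi> t) * \<phi> t) = \<phi>"
proof
  show "cnj (\<phi> t) * \<phi> t = \<phi> t" for t
    using indicator_01[of t] by auto
qed

lemma star_generator: "st (B h k \<phi>) = B k h \<phi>"
proof -
  have "\<forall>h k. \<forall>f\<in>T. st (B h k f) = B k h (\<lambda>t. cnj (f t))"
    using rpqwn unfolding rpqwn_def by blast
  then show ?thesis
    using indicator_in_T by (simp add: cnj_indicator)
qed

text \<open>With N = 0 the second sum of the RPQWN relation runs over {1..min k 0} = {}.\<close>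
lemma bracket_annihilator:
  assumes "h \<le> K"
  shows "br (B 0 K \<phi>) (B h k \<phi>) =
    (\<Sum>L\<in>{1..h}. sc (complex_of_real (bcoef c L K h)) (B (h - L) (K + k - L) \<phi>))"
proof -
  have "\<forall>N K n k. \<forall>f\<in>T. \<forall>g\<in>T.
        br (B N K (\<lambda>t. cnj (g t))) (B n k f) =
          (\<Sum>L\<in>{1..min K n}. sc (complex_of_real (bcoef c L K n)) (B (N + n - L) (K + k - L) (\<lambda>t. cnj (g t) * f t)))
        - (\<Sum>L\<in>{1..min k N}. sc (complex_of_real (bcoef c L k N)) (B (N + n - L) (K + k - L) (\<lambda>t. cnj (g t) * f t)))"
    using rpqwn unfolding rpqwn_def by blast
  from this[rule_format, OF indicator_in_T indicator_in_T, of 0 K h k] show ?thesis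
    using assms by (simp add: cnj_indicator cnj_indicator_mult min_absorb2)
qed

lemma third_bracket_expansion:
  "br (B 0 n \<phi>) (br (B 0 n \<phi>) (br (B 0 n \<phi>) (B n 0 \<phi>))) =
    (\<Sum>L1\<in>{1..n}. \<Sum>L2\<in>{1..n-L1}. \<Sum>L3\<in>{1..n-(L1+L2)}.
      sc (complex_of_real (triple_bcoef c n L1 L2 L3)) (B (n - (L1 + L2 + L3)) (3 * n - (L1 + L2 + L3)) \<phi>))"
proof -
  have "br (B 0 n \<phi>) (B n 0 \<phi>) =
      (\<Sum>L1\<in>{1..n}. sc (complex_of_real (bcoef c L1 n n)) (B (n - L1) (n - L1) \<phi>))"
    by (simp add: bracket_annihilator)
  then have second: "br (B 0 n \<phi>) (br (B 0 n \<phi>) (B n 0 \<phi>)) =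
      (\<Sum>L1\<in>{1..n}. \<Sum>L2\<in>{1..n-L1}. sc (complex_of_real (bcoef c L1 n n * bcoef c L2 n (n - L1)))
         (B (n - (L1 + L2)) (2 * n - (L1 + L2)) \<phi>))"
    by (simp add: bracket_right_sum bracket_right_scale bracket_annihilator scale_sum_right mult_2)
  have index: "n + (2 * n - (L1 + L2)) - L3 = 3 * n - (L1 + L2 + L3)" if "L1 + L2 \<le> n" for L1 L2 L3
    using that by simp
  have "br (B 0 n \<phi>) (br (B 0 n \<phi>) (br (B 0 n \<phi>) (B n 0 \<phi>))) =
      (\<Sum>L1\<in>{1..n}. \<Sum>L2\<in>{1..n-L1}. \<Sum>L3\<in>{1..n-(L1+L2)}.
        sc (complex_of_real (triple_bcoef c n L1 L2 L3)) (B (n - (L1 + L2 + L3)) (n + (2 * n - (L1 + L2)) - L3) \<phi>))"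
    unfolding second
    by (simp add: bracket_right_sum bracket_right_scale bracket_annihilator scale_sum_right triple_bcoef_def)
  also have "\<dots> = (\<Sum>L1\<in>{1..n}. \<Sum>L2\<in>{1..n-L1}. \<Sum>L3\<in>{1..n-(L1+L2)}.
      sc (complex_of_real (triple_bcoef c n L1 L2 L3)) (B (n - (L1 + L2 + L3)) (3 * n - (L1 + L2 + L3)) \<phi>))"
    by (intro sum.cong refl) (auto simp: index)
  finally show ?thesis .
qed

lemma third_bracket_inner_split:
  assumes "L1 + L2 \<le> n"
  shows "(\<Sum>L3\<in>{1..n-(L1+L2)}.
      sc (complex_of_real (triple_bcoef c n L1 L2 L3)) (B (n - (L1 + L2 + L3)) (3 * n - (L1 + L2 + L3)) \<phi>)) =
    sc (complex_of_real (triple_bcoef c n L1 L2 (n - (L1 + L2)))) (B 0 (2 * n) \<phi>) +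
    (\<Sum>L3\<in>{L3\<in>{1..n-(L1+L2)}. L1 + L2 + L3 \<noteq> n}.
      sc (complex_of_real (triple_bcoef c n L1 L2 L3)) (B (n - (L1 + L2 + L3)) (3 * n - (L1 + L2 + L3)) \<phi>))"
proof (cases "L1 + L2 = n")
  case True
  then show ?thesis by (simp add: triple_bcoef_eq_0)
next
  case False
  let ?p = "n - (L1 + L2)"
  define F where "F = {L3\<in>{1..?p}. L1 + L2 + L3 \<noteq> n}"
  have "{1..?p} = insert ?p F" and "?p \<notin> F" and "finite F"
    using assms False by (auto simp: F_def)
  moreover have "n - (L1 + L2 + ?p) = 0" and "3 * n - (L1 + L2 + ?p) = 2 * n"
    using assms by auto
  ultimately show ?thesis
    unfolding F_def[symmetric] by simp
qed

lemma third_bracket_decomposition: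
  "br (B 0 n \<phi>) (br (B 0 n \<phi>) (br (B 0 n \<phi>) (B n 0 \<phi>))) =
    sc (complex_of_real (\<Sum>L1\<in>{1..n-1}. \<Sum>L2\<in>{1..n-L1}. triple_bcoef c n L1 L2 (n - (L1 + L2))))
      (B 0 (2 * n) \<phi>) +
    (\<Sum>L1\<in>{1..n-1}. \<Sum>L2\<in>{1..n-L1}. \<Sum>L3\<in>{L3\<in>{1..n-(L1+L2)}. L1 + L2 + L3 \<noteq> n}.
      sc (complex_of_real (triple_bcoef c n L1 L2 L3)) (B (n - (L1 + L2 + L3)) (3 * n - (L1 + L2 + L3)) \<phi>))"
proof -
  let ?X = "\<lambda>L1 L2 L3. B (n - (L1 + L2 + L3)) (3 * n - (L1 + L2 + L3)) \<phi>"
  have drop_last: "(\<Sum>L1\<in>{1..n}. F L1) = (\<Sum>L1\<in>{1..n-1}. F L1)"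
    if "F n = 0" for F :: "nat \<Rightarrow> 'a"
    using that by (cases n) simp_all
  have "br (B 0 n \<phi>) (br (B 0 n \<phi>) (br (B 0 n \<phi>) (B n 0 \<phi>))) =
      (\<Sum>L1\<in>{1..n-1}. \<Sum>L2\<in>{1..n-L1}. \<Sum>L3\<in>{1..n-(L1+L2)}.
        sc (complex_of_real (triple_bcoef c n L1 L2 L3)) (?X L1 L2 L3))"
    unfolding third_bracket_expansion by (rule drop_last) simp
  also have "\<dots> = (\<Sum>L1\<in>{1..n-1}. \<Sum>L2\<in>{1..n-L1}.
      sc (complex_of_real (triple_bcoef c n L1 L2 (n - (L1 + L2)))) (B 0 (2 * n) \<phi>) +
      (\<Sum>L3\<in>{L3\<in>{1..n-(L1+L2)}. L1 + L2 + L3 \<noteq> n}.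
        sc (complex_of_real (triple_bcoef c n L1 L2 L3)) (?X L1 L2 L3)))"
    by (intro sum.cong refl third_bracket_inner_split) auto
  finally show ?thesis
    by (simp only: scale_sum_left sum.distrib of_real_sum)
qed

end

theorem lemma1:
  fixes c :: real and I :: "real set" and T :: "(real \<Rightarrow> complex) set"
    and sc :: "complex \<Rightarrow> 'a::ab_group_add \<Rightarrow> 'a"
    and br :: "'a \<Rightarrow> 'a \<Rightarrow> 'a" and st :: "'a \<Rightarrow> 'a"
    and B :: "nat \<Rightarrow> nat \<Rightarrow> (real \<Rightarrow> complex) \<Rightarrow> 'a" and n :: nat
  assumes "c > 0"
    and "is_interval I" and "emeasure lborel I < \<infinity>"
    and "rpqwn c T sc br st B"
    and "(indicator I :: real \<Rightarrow> complex) \<in> T"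
    and "n \<ge> 3"
  shows
   "let Bc = (\<lambda>h k. B h k (indicator I));
        C3 = br (Bc 0 n) (br (Bc 0 n) (br (Bc 0 n) (Bc n 0)));
        \<beta> = (\<Sum>L1\<in>{1..n-1}. \<Sum>L2\<in>{1..n-L1}.
               bcoef c L1 n n * bcoef c L2 n (n - L1) * bcoef c (n - (L1 + L2)) n (n - (L1 + L2)));
        N = (\<Sum>L1\<in>{1..n-1}. \<Sum>L2\<in>{1..n-L1}. \<Sum>L3\<in>{L3\<in>{1..n-(L1+L2)}. L1 + L2 + L3 \<noteq> n}.
               sc (complex_of_real (bcoef c L1 n n * bcoef c L2 n (n - L1) * bcoef c L3 n (n - (L1 + L2))))
                 (Bc (n - (L1 + L2 + L3)) (3 * n - (L1 + L2 + L3))))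
    in C3 = sc (complex_of_real \<beta>) (Bc 0 (2 * n)) + N \<and> \<beta> \<noteq> 0 \<and>
       st N = (\<Sum>L1\<in>{1..n-1}. \<Sum>L2\<in>{1..n-L1}. \<Sum>L3\<in>{L3\<in>{1..n-(L1+L2)}. L1 + L2 + L3 \<noteq> n}.
               sc (complex_of_real (bcoef c L1 n n * bcoef c L2 n (n - L1) * bcoef c L3 n (n - (L1 + L2))))
                 (Bc (3 * n - (L1 + L2 + L3)) (n - (L1 + L2 + L3))))"
proof -
  interpret rpqwn_indicator c T sc br st B "indicator I"
    using assms(4,5) by unfold_locales (auto simp: indicator_def)
  show ?thesis
    unfolding Let_def
    by (intro conjI third_bracket_decomposition[unfolded triple_bcoef_def]
        sum_triple_bcoef_pos[OF assms(1,6), unfolded triple_bcoef_def, THEN dual_order.strict_implies_not_eq])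
      (simp only: star_sum star_scale_real star_generator)
qed

end
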